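(* Let $\mathbf p=(p_1,\dots,p_n)$ be positive integers with $p_1\ge\cdots\ge p_n$, let $c\in[0,1]$, let $g=\gcd(p_1,\dots,p_n)$, and let $P=(p_1+\cdots+p_n)/g$. For each pair $i<j$, let $T_{ij}$ be the finite word consisting of the first $(p_i+p_j)/g$ terms of the two-party sequence $S_c((p_i,p_j))$, with party labels $1,2$ replaced by $i,j$ respectively. Run the following lifting procedure for $P$ steps. At each step, find a label $k\in\{1,\dots,n\}$ that is the first remaining entry of all $n-1$ words $T_{ij}$ with $k\in\{i,j\}$. Append $k$ to an output word $w$, and delete the first entry of each of those $n-1$ words. Then: (i) at every step such a label $k$ exists and is unique; (ii) after $P$ steps all the words $T_{ij}$ are empty; (iii) the output word $w=(w_1,\dots,w_P)$ equals the first $P$ terms of $S_c(\mathbf p)$.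
   Context: Stationary divisor method with cut point $c\in[0,1]$ for a vote vector $\mathbf q=(q_1,\dots,q_m)$ with $q_1\ge\cdots\ge q_m$: seats are allocated one at a time. Initially each party $i$ has $a_i=0$ seats; each next seat goes to a party $i$ maximizing $q_i/(a_i+c)$, whose $a_i$ then increases by $1$. Ties are broken in favor of the smallest index. For $c=0$ the convention is that $q_i/0>q_j/0$ whenever $q_i>q_j$, and $q_i/0>q_j/k$ for every $k>0$. $S_c(\mathbf q)$ is the infinite sequence of indices of parties receiving successive seats. *)

theory Defs
  imports Complex_Main
begin

text \<open>Parties are indexed 0,...,length q - 1 (0-based). Seat state a :: nat => nat.\<close>

text \<open>prio_ge q c a i j: the priority q_i/(a_i+c) of party i is at least that of party j,
  with the convention for division by zero (only possible when c = 0 and a_i = 0):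
  q_i/0 vs q_j/0 compared by q, and q_i/0 beats q_j/k for every k > 0.\<close>
definition prio_ge :: "nat list \<Rightarrow> real \<Rightarrow> (nat \<Rightarrow> nat) \<Rightarrow> nat \<Rightarrow> nat \<Rightarrow> bool" where
  "prio_ge q c a i j =
    (let x = real (a i) + c; y = real (a j) + c in
     if x = 0 \<and> y = 0 then q ! i \<ge> q ! j
     else if x = 0 then True
     else if y = 0 then False
     else real (q ! i) / x \<ge> real (q ! j) / y)"

definition winner :: "nat list \<Rightarrow> real \<Rightarrow> (nat \<Rightarrow> nat) \<Rightarrow> nat" where
  "winner q c a = (LEAST i. i < length q \<and> (\<forall>j < length q. prio_ge q c a i j))"

primrec seats :: "nat list \<Rightarrow> real \<Rightarrow> nat \<Rightarrow> (nat \<Rightarrow> nat)" where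
  "seats q c 0 = (\<lambda>_. 0)"
| "seats q c (Suc t) = (let a = seats q c t; k = winner q c a in a(k := a k + 1))"

text \<open>S_c(q): the t-th term (t = 0,1,2,...) is the index of the party receiving seat t+1.\<close>
definition stat_seq :: "nat list \<Rightarrow> real \<Rightarrow> nat \<Rightarrow> nat" where
  "stat_seq q c t = winner q c (seats q c t)"

definition pair_word :: "nat list \<Rightarrow> real \<Rightarrow> nat \<Rightarrow> nat \<Rightarrow> nat list" where
  "pair_word p c i j =
     map (\<lambda>x. if x = 0 then i else j)
       (map (stat_seq [p ! i, p ! j] c) [0 ..< (p ! i + p ! j) div Gcd (set p)])"

definition lift_ok :: "nat \<Rightarrow> (nat \<Rightarrow> nat \<Rightarrow> nat list) \<Rightarrow> nat \<Rightarrow> bool" where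
  "lift_ok n W k = (k < n \<and> (\<forall>j < n. j \<noteq> k \<longrightarrow>
      W (min k j) (max k j) \<noteq> [] \<and> hd (W (min k j) (max k j)) = k))"

definition lift_label :: "nat \<Rightarrow> (nat \<Rightarrow> nat \<Rightarrow> nat list) \<Rightarrow> nat" where
  "lift_label n W = (THE k. lift_ok n W k)"

definition lift_step :: "nat \<Rightarrow> nat \<Rightarrow> (nat \<Rightarrow> nat \<Rightarrow> nat list) \<Rightarrow> (nat \<Rightarrow> nat \<Rightarrow> nat list)" where
  "lift_step n k W = (\<lambda>i j. if i < j \<and> j < n \<and> (i = k \<or> j = k) then tl (W i j) else W i j)"

primrec lift_state :: "nat list \<Rightarrow> real \<Rightarrow> nat \<Rightarrow> (nat \<Rightarrow> nat \<Rightarrow> nat list)" where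
  "lift_state p c 0 = pair_word p c"
| "lift_state p c (Suc s) =
     (let W = lift_state p c s in lift_step (length p) (lift_label (length p) W) W)"

text \<open>Output letter w_{s+1} of the lifting procedure.\<close>
definition lift_out :: "nat list \<Rightarrow> real \<Rightarrow> nat \<Rightarrow> nat" where
  "lift_out p c s = lift_label (length p) (lift_state p c s)"

end

theory Submission
  imports Defs
begin

text \<open>
  Regard the (b+1)-th seat of party i as a slot (i, b) with time (b + c)/p_i, and order slots by
  time, ties going to the smaller index. The divisor method hands out slots in this order, so
  each allocation it produces is down-closed (every filled slot precedes every unfilled one), and
  a down-closed allocation is determined by its number of seats. Restricting to two parties
  i < j preserves the order, so after a_i + a_j seats the two-party method holds (a_i, a_j) and
  next serves whichever of i, j the full method serves first. Hence the winner k of the next seat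
  heads every remaining word T_ij containing it, and no other label can. Finally, for c in [0,1]
  the proportional allocation p_i/g is down-closed, so after P seats party i holds p_i/g seats
  and every T_ij has been consumed.
\<close>

definition slot_time :: "nat list \<Rightarrow> real \<Rightarrow> nat \<times> nat \<Rightarrow> real" where
  "slot_time q c s = (real (snd s) + c) / real (q ! fst s)"

definition slot_less :: "nat list \<Rightarrow> real \<Rightarrow> nat \<times> nat \<Rightarrow> nat \<times> nat \<Rightarrow> bool" where
  "slot_less q c s s' \<longleftrightarrow>
     slot_time q c s < slot_time q c s' \<or> (slot_time q c s = slot_time q c s' \<and> fst s < fst s')"

definition down_closed :: "nat list \<Rightarrow> real \<Rightarrow> (nat \<Rightarrow> nat) \<Rightarrow> bool" where
  "down_closed q c a \<longleftrightarrow> (\<forall>i < length q. \<forall>j < length q. \<forall>b b'.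
     b < a i \<longrightarrow> a j \<le> b' \<longrightarrow> slot_less q c (i, b) (j, b'))"

lemma slot_less_trans: "slot_less q c s s' \<Longrightarrow> slot_less q c s' s'' \<Longrightarrow> slot_less q c s s''"
  unfolding slot_less_def by auto

lemma slot_less_asym: "slot_less q c s s' \<Longrightarrow> \<not> slot_less q c s' s"
  unfolding slot_less_def by auto

lemma slot_less_total: "fst s \<noteq> fst s' \<Longrightarrow> slot_less q c s s' \<or> slot_less q c s' s"
  unfolding slot_less_def by auto

lemma slot_less_same_party: "0 < q ! i \<Longrightarrow> b < b' \<Longrightarrow> slot_less q c (i, b) (i, b')"
  unfolding slot_less_def slot_time_def by (auto intro!: divide_strict_right_mono)

lemma down_closed_unique:
  assumes "down_closed q c a" "down_closed q c a'"
    and "(\<Sum>i<length q. a i) = (\<Sum>i<length q. a' i)" "i < length q"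
  shows "a i = a' i"
proof -
  have no_crossing: "\<not> (a i < a' i \<and> a' j < a j)" if "i < length q" "j < length q" for i j
    using assms(1,2) that slot_less_asym unfolding down_closed_def by blast
  then have "(\<forall>i < length q. a i \<le> a' i) \<or> (\<forall>i < length q. a' i \<le> a i)"
    by (metis not_le)
  then show ?thesis
  proof
    assume "\<forall>i < length q. a i \<le> a' i"
    then show ?thesis using assms(4) by (intro sum_mono_inv[OF assms(3)]) auto
  next
    assume "\<forall>i < length q. a' i \<le> a i"
    then show ?thesis using assms(4) by (intro sum_mono_inv[OF assms(3)[symmetric], symmetric]) auto
  qed
qed

lemma seats_mono: "t \<le> t' \<Longrightarrow> seats q c t i \<le> seats q c t' i"
proof (induction t' rule: dec_induct)
  case (step t')
  then show ?case by (auto simp: Let_def)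
qed simp

locale stationary_divisor =
  fixes q :: "nat list" and c :: real
  assumes votes_pos: "\<forall>x \<in> set q. 0 < x"
    and votes_sorted: "sorted_wrt (\<ge>) q"
    and cut_nonneg: "0 \<le> c"
    and parties_nonempty: "q \<noteq> []"
begin

lemma votes_nth_pos: "i < length q \<Longrightarrow> 0 < q ! i"
  using votes_pos nth_mem by blast

lemma prio_ge_iff:
  assumes "k < length q" "j < length q"
  shows "prio_ge q c a k j \<longleftrightarrow>
    (if real (a k) + c = 0 \<and> real (a j) + c = 0 then q ! j \<le> q ! k
     else slot_time q c (k, a k) \<le> slot_time q c (j, a j))"
  using assms votes_nth_pos cut_nonneg unfolding prio_ge_def slot_time_def Let_def
  by (auto simp: divide_simps add_nonneg_eq_0_iff mult_le_0_iff mult.commute)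

text \<open>
  Among slots of time 0 (possible only for c = 0) prio_ge breaks ties by votes, slot_less by
  index; the two agree because q is sorted.
\<close>
lemma prio_ge_if_slot_less:
  assumes "k < length q" "j < length q" "slot_less q c (k, a k) (j, a j)"
  shows "prio_ge q c a k j"
proof -
  have "k < j \<Longrightarrow> q ! j \<le> q ! k"
    using votes_sorted assms by (simp add: sorted_wrt_iff_nth_less)
  moreover have "real (a k) + c = 0 \<Longrightarrow> real (a j) + c = 0 \<Longrightarrow> k < j"
    using assms(3) unfolding slot_less_def slot_time_def by auto
  ultimately show ?thesis
    using assms unfolding prio_ge_iff[OF assms(1,2)] slot_less_def by auto
qed

lemma not_prio_ge_if_slot_time_less:
  assumes "k < length q" "j < length q" "slot_time q c (k, a k) < slot_time q c (j, a j)"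
  shows "\<not> prio_ge q c a j k"
proof -
  have "0 \<le> slot_time q c (k, a k)"
    using cut_nonneg unfolding slot_time_def by simp
  then have "real (a j) + c \<noteq> 0"
    using assms(3) unfolding slot_time_def by auto
  then show ?thesis
    using assms unfolding prio_ge_iff[OF assms(2,1)] by auto
qed

lemma winner_eqI:
  assumes "k < length q" and first: "\<forall>j < length q. j \<noteq> k \<longrightarrow> slot_less q c (k, a k) (j, a j)"
  shows "winner q c a = k"
  unfolding winner_def
proof (rule Least_equality)
  have "prio_ge q c a k j" if "j < length q" for j
  proof (cases "j = k")
    case True
    then show ?thesis using assms(1) by (simp add: prio_ge_iff)
  next
    case False
    then show ?thesis using assms that by (simp add: prio_ge_if_slot_less)
  qed
  then show "k < length q \<and> (\<forall>j < length q. prio_ge q c a k j)"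
    using assms(1) by blast
next
  fix i assume i: "i < length q \<and> (\<forall>j < length q. prio_ge q c a i j)"
  show "k \<le> i"
  proof (rule ccontr)
    assume "\<not> k \<le> i"
    moreover from this have "slot_less q c (k, a k) (i, a i)" using first i by auto
    ultimately show False
      using i assms(1) not_prio_ge_if_slot_time_less[of k i a] unfolding slot_less_def by auto
  qed
qed

lemma exists_first_next_slot:
  "\<exists>k < length q. \<forall>j < length q. j \<noteq> k \<longrightarrow> slot_less q c (k, a k) (j, a j)"
proof -
  define T where "T = Min ((\<lambda>j. slot_time q c (j, a j)) ` {..<length q})"
  have "T \<in> (\<lambda>j. slot_time q c (j, a j)) ` {..<length q}"
    unfolding T_def using parties_nonempty by (intro Min_in) auto
  then have "\<exists>j. j < length q \<and> slot_time q c (j, a j) = T"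
    by auto
  define k where "k = (LEAST j. j < length q \<and> slot_time q c (j, a j) = T)"
  have k: "k < length q" "slot_time q c (k, a k) = T"
    using LeastI_ex[OF \<open>\<exists>j. _\<close>] unfolding k_def by auto
  have "slot_less q c (k, a k) (j, a j)" if "j < length q" "j \<noteq> k" for j
  proof -
    have "T \<le> slot_time q c (j, a j)"
      unfolding T_def using that(1) by (intro Min_le) auto
    moreover have "slot_time q c (j, a j) = T \<Longrightarrow> k \<le> j"
      unfolding k_def using that(1) by (intro Least_le) simp
    ultimately show ?thesis
      using k that unfolding slot_less_def by auto
  qed
  then show ?thesis using k(1) by blast
qed

lemma winner_first_next_slot:
  "winner q c a < length q \<and>
   (\<forall>j < length q. j \<noteq> winner q c a \<longrightarrow> slot_less q c (winner q c a, a (winner q c a)) (j, a j))"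
  using exists_first_next_slot[of a] winner_eqI by metis

lemma down_closed_seat_to_winner:
  assumes "down_closed q c a"
  defines "k \<equiv> winner q c a"
  shows "down_closed q c (a(k := a k + 1))"
  unfolding down_closed_def
proof (intro allI impI)
  fix i j b b'
  assume ij: "i < length q" "j < length q"
    and b: "b < (a(k := a k + 1)) i" "(a(k := a k + 1)) j \<le> b'"
  have k: "k < length q" "\<And>j. j < length q \<Longrightarrow> j \<noteq> k \<Longrightarrow> slot_less q c (k, a k) (j, a j)"
    using winner_first_next_slot[of a] unfolding k_def by auto
  have old: "a j \<le> b'"
    using b by (auto split: if_splits)
  show "slot_less q c (i, b) (j, b')"
  proof (cases "b < a i")
    case True
    then show ?thesis using assms(1) ij old unfolding down_closed_def by blast
  next
    case False
    then have new_slot: "i = k" "b = a k" using b by (auto split: if_splits)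
    show ?thesis
    proof (cases "j = k")
      case True
      then show ?thesis
        using new_slot b ij by (simp add: slot_less_same_party votes_nth_pos)
    next
      case False
      then have "slot_less q c (k, a k) (j, a j)" using k ij by simp
      moreover have "a j = b' \<or> slot_less q c (j, a j) (j, b')"
        using old ij(2) by (auto simp: le_less intro: slot_less_same_party votes_nth_pos)
      ultimately show ?thesis using new_slot slot_less_trans by auto
    qed
  qed
qed

lemma down_closed_seats: "down_closed q c (seats q c t)"
proof (induction t)
  case 0
  show ?case unfolding down_closed_def by simp
next
  case (Suc t)
  then show ?case
    unfolding seats.simps Let_def by (rule down_closed_seat_to_winner)
qed

lemma sum_seats: "(\<Sum>i < length q. seats q c t i) = t"
proof (induction t)
  case (Suc t)
  define a where "a = seats q c t"
  define k where "k = winner q c a"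
  have k: "k < length q" using winner_first_next_slot[of a] k_def by auto
  have "(\<Sum>i < length q. (a(k := a k + 1)) i) = (\<Sum>i < length q. a i + (if i = k then 1 else 0))"
    by (rule sum.cong) auto
  also have "\<dots> = (\<Sum>i < length q. a i) + 1"
    using k by (simp add: sum.distrib)
  finally show ?case using Suc a_def k_def by (simp add: Let_def)
qed simp

lemma seats_eqI:
  "down_closed q c a \<Longrightarrow> (\<Sum>i < length q. a i) = t \<Longrightarrow> i < length q \<Longrightarrow> seats q c t i = a i"
  using down_closed_unique[OF down_closed_seats] sum_seats by metis

text \<open>
  A slot inside the proportional allocation has time at most 1/g and one outside has time at
  least 1/g; the two bounds are attained only for c = 1 and c = 0 respectively.
\<close>
lemma down_closed_proportional:
  assumes "c \<le> 1" "\<forall>x \<in> set q. g dvd x"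
  shows "down_closed q c (\<lambda>i. q ! i div g)"
  unfolding down_closed_def
proof (intro allI impI)
  fix i j b b'
  assume ij: "i < length q" "j < length q" and b: "b < q ! i div g" "q ! j div g \<le> b'"
  define m where "m i = q ! i div g" for i
  have q_eq: "q ! i = m i * g" "q ! j = m j * g"
    using assms(2) ij nth_mem unfolding m_def by auto
  then have pos: "0 < m i" "0 < m j" "0 < g"
    using votes_nth_pos ij by (metis mult_eq_0_iff neq0_conv)+
  have "(real b + c) * m j \<le> (real (m i) - 1 + c) * m j"
    using b pos unfolding m_def by (intro mult_right_mono) linarith+
  also have "\<dots> < (real (m j) + c) * m i"
  proof -
    have "(c - 1) * m j \<le> 0" "0 \<le> c * m i"
      using assms(1) cut_nonneg by (simp_all add: mult_nonpos_nonneg)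
    moreover have "(c - 1) * m j < 0 \<or> 0 < c * m i"
      using pos by (cases "c < 1") (auto simp: mult_neg_pos)
    ultimately show ?thesis by (auto simp: algebra_simps)
  qed
  also have "\<dots> \<le> (real b' + c) * m i"
    using b unfolding m_def by (intro mult_right_mono) auto
  finally have cross: "(real b + c) * m j < (real b' + c) * m i" .
  have "x * m j < y * m i \<Longrightarrow> x / (m i * g) < y / (m j * g)" for x y :: real
    using pos by (simp add: field_simps)
  from this[OF cross] have "(real b + c) / (m i * g) < (real b' + c) / (m j * g)" .
  then show "slot_less q c (i, b) (j, b')"
    unfolding slot_less_def slot_time_def by (simp add: q_eq)
qed

lemma seats_proportional:
  assumes "c \<le> 1" "\<forall>x \<in> set q. g dvd x" "i < length q"
  shows "seats q c (sum_list q div g) i = q ! i div g"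
proof -
  have "g \<noteq> 0"
    using assms(2) votes_pos parties_nonempty by (metis dvd_0_left_iff last_in_set neq0_conv)
  moreover have "sum_list q = (\<Sum>i < length q. q ! i div g) * g"
    using assms(2) by (simp add: sum_list_sum_nth atLeast0LessThan sum_distrib_right)
  ultimately have "sum_list q div g = (\<Sum>i < length q. q ! i div g)"
    by simp
  then show ?thesis
    using seats_eqI[OF down_closed_proportional[OF assms(1,2)]] assms(3) by simp
qed

lemma stat_seq_pair:
  assumes "down_closed q c a" "i < j" "j < length q"
  shows "stat_seq [q ! i, q ! j] c (a i + a j) = (if slot_less q c (i, a i) (j, a j) then 0 else 1)"
proof -
  let ?r = "[q ! i, q ! j]" and ?b = "\<lambda>x. [a i, a j] ! x" and ?party = "\<lambda>x. [i, j] ! x"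
  have "q ! j \<le> q ! i"
    using votes_sorted assms(2,3) by (simp add: sorted_wrt_iff_nth_less)
  then interpret pair: stationary_divisor ?r c
    using votes_nth_pos cut_nonneg assms(2,3) by unfold_locales auto
  have two: "x < length ?r \<longleftrightarrow> x = 0 \<or> x = 1" for x by auto
  have slot_less_pair: "slot_less ?r c (x, b) (y, b') = slot_less q c (?party x, b) (?party y, b')"
    if "x < length ?r" "y < length ?r" for x y b b'
    using that assms(2) unfolding two slot_less_def slot_time_def by auto
  have party: "?party x < length q" "?b x = a (?party x)" if "x < length ?r" for x
    using that assms(2,3) unfolding two by auto
  have "down_closed ?r c ?b"
    unfolding down_closed_def
  proof (intro allI impI)
    fix x y b b'
    assume xy: "x < length ?r" "y < length ?r" and "b < ?b x" "?b y \<le> b'"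
    then show "slot_less ?r c (x, b) (y, b')"
      using assms(1) party[OF xy(1)] party[OF xy(2)]
      unfolding slot_less_pair[OF xy] down_closed_def by auto
  qed
  then have seats_pair: "seats ?r c (a i + a j) x = ?b x" if "x < length ?r" for x
    using pair.seats_eqI that by (simp add: numeral_2_eq_2)
  show ?thesis
  proof (cases "slot_less q c (i, a i) (j, a j)")
    case True
    then have "winner ?r c (seats ?r c (a i + a j)) = 0"
      by (intro pair.winner_eqI) (auto simp: seats_pair slot_less_pair less_Suc_eq)
    then show ?thesis using True by (simp add: stat_seq_def)
  next
    case False
    then have "slot_less q c (j, a j) (i, a i)"
      using slot_less_total[of "(i, a i)" "(j, a j)"] assms(2) by auto
    then have "winner ?r c (seats ?r c (a i + a j)) = 1"
      by (intro pair.winner_eqI) (auto simp: seats_pair slot_less_pair less_Suc_eq)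
    then show ?thesis using False by (simp add: stat_seq_def)
  qed
qed

end

lemma lift_ok_unique: "lift_ok n W k \<Longrightarrow> lift_ok n W k' \<Longrightarrow> k = k'"
  unfolding lift_ok_def by (metis min.commute max.commute)

lemma lift_label_eqI: "lift_ok n W k \<Longrightarrow> lift_label n W = k"
  unfolding lift_label_def using lift_ok_unique by blast

locale lifting = stationary_divisor p c for p c +
  assumes cut_le_1: "c \<le> 1"
begin

abbreviation "g \<equiv> Gcd (set p)"
abbreviation "P \<equiv> sum_list p div g"

lemma seats_final: "i < length p \<Longrightarrow> seats p c P i = p ! i div g"
  using seats_proportional[OF cut_le_1] by (simp add: Gcd_dvd)

lemma seats_le_final: "s \<le> P \<Longrightarrow> i < length p \<Longrightarrow> seats p c s i \<le> p ! i div g"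
  using seats_mono seats_final by metis

lemma pair_word_length_nth:
  assumes "i < length p" "j < length p"
  shows "length (pair_word p c i j) = p ! i div g + p ! j div g"
    and "t < p ! i div g + p ! j div g \<Longrightarrow>
      pair_word p c i j ! t = (if stat_seq [p ! i, p ! j] c t = 0 then i else j)"
proof -
  have "(p ! i + p ! j) div g = p ! i div g + p ! j div g"
    using assms by (simp add: div_add Gcd_dvd)
  then show "length (pair_word p c i j) = p ! i div g + p ! j div g"
    and "t < p ! i div g + p ! j div g \<Longrightarrow>
      pair_word p c i j ! t = (if stat_seq [p ! i, p ! j] c t = 0 then i else j)"
    unfolding pair_word_def by simp_all
qed

lemma hd_drop_pair_word:
  assumes "s < P" "i < j" "j < length p" "stat_seq p c s \<in> {i, j}"
  defines "W \<equiv> drop (seats p c s i + seats p c s j) (pair_word p c i j)"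
  shows "W \<noteq> [] \<and> hd W = stat_seq p c s"
proof -
  define a where "a = seats p c s"
  define k where "k = stat_seq p c s"
  have k: "k < length p" "\<And>l. l < length p \<Longrightarrow> l \<noteq> k \<Longrightarrow> slot_less p c (k, a k) (l, a l)"
    using winner_first_next_slot[of a] unfolding k_def a_def stat_seq_def by auto
  have "a k < seats p c (Suc s) k"
    unfolding a_def k_def stat_seq_def by (simp add: Let_def)
  then have "a k < p ! k div g"
    using seats_le_final[of "Suc s" k] assms(1) k(1) by simp
  moreover have "a i \<le> p ! i div g" "a j \<le> p ! j div g"
    using seats_le_final assms(1-3) unfolding a_def by simp_all
  ultimately have in_range: "a i + a j < p ! i div g + p ! j div g"
    using assms(4) unfolding k_def by auto
  have "stat_seq [p ! i, p ! j] c (a i + a j) = (if k = i then 0 else 1)"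
    using stat_seq_pair[OF down_closed_seats assms(2,3), of s] k assms(2-4) slot_less_asym
    unfolding a_def k_def by fastforce
  then show ?thesis
    using in_range assms(2-4) pair_word_length_nth[of i j]
    unfolding W_def a_def k_def by (auto simp: hd_drop_conv_nth)
qed

lemma lift_ok_stat_seq:
  assumes "s < P"
    and state: "\<And>i j. i < j \<Longrightarrow> j < length p \<Longrightarrow>
      lift_state p c s i j = drop (seats p c s i + seats p c s j) (pair_word p c i j)"
  shows "lift_ok (length p) (lift_state p c s) (stat_seq p c s)"
proof -
  have "stat_seq p c s < length p"
    using winner_first_next_slot unfolding stat_seq_def by blast
  moreover have "lift_state p c s (min k l) (max k l) \<noteq> [] \<and>
      hd (lift_state p c s (min k l) (max k l)) = k"
    if "k = stat_seq p c s" "l < length p" "l \<noteq> k" for k l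
    using hd_drop_pair_word[OF assms(1), of "min k l" "max k l"] state[of "min k l" "max k l"]
      that calculation by (simp add: min_def max_def)
  ultimately show ?thesis unfolding lift_ok_def by blast
qed

lemma lift_state_eq_drop:
  "s \<le> P \<Longrightarrow> i < j \<Longrightarrow> j < length p \<Longrightarrow>
    lift_state p c s i j = drop (seats p c s i + seats p c s j) (pair_word p c i j)"
proof (induction s arbitrary: i j)
  case (Suc s)
  define k where "k = stat_seq p c s"
  have "lift_label (length p) (lift_state p c s) = k"
    unfolding k_def using Suc by (intro lift_label_eqI lift_ok_stat_seq) auto
  then have "lift_state p c (Suc s) = lift_step (length p) k (lift_state p c s)"
    by simp
  moreover have "seats p c (Suc s) = (seats p c s)(k := seats p c s k + 1)"
    unfolding k_def stat_seq_def by (simp add: Let_def)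
  ultimately show ?case
    using Suc by (auto simp: lift_step_def drop_Suc tl_drop)
qed simp

lemma lift_label_eq_stat_seq: "s < P \<Longrightarrow> lift_label (length p) (lift_state p c s) = stat_seq p c s"
  by (intro lift_label_eqI lift_ok_stat_seq lift_state_eq_drop) auto

end

theorem mainTheorem16:
  fixes p :: "nat list" and c :: real
  assumes pos: "\<forall>x \<in> set p. x > 0"
    and sorted: "sorted_wrt (\<ge>) p"
    and c0: "0 \<le> c" and c1: "c \<le> 1"
  defines "P \<equiv> sum_list p div Gcd (set p)"
  shows "(\<forall>s < P. \<exists>!k. lift_ok (length p) (lift_state p c s) k)
    \<and> (\<forall>i j. i < j \<and> j < length p \<longrightarrow> lift_state p c P i j = [])
    \<and> map (lift_out p c) [0 ..< P] = map (stat_seq p c) [0 ..< P]"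
proof (cases "p = []")
  case True
  then show ?thesis unfolding P_def by simp
next
  case False
  then interpret lifting p c
    using pos sorted c0 c1 by unfold_locales auto
  have "\<forall>s < P. \<exists>!k. lift_ok (length p) (lift_state p c s) k"
    using lift_ok_stat_seq lift_state_eq_drop lift_ok_unique unfolding P_def by auto
  moreover have "lift_state p c P i j = []" if "i < j" "j < length p" for i j
    using lift_state_eq_drop[of P i j] seats_final pair_word_length_nth that unfolding P_def by simp
  moreover have "map (lift_out p c) [0 ..< P] = map (stat_seq p c) [0 ..< P]"
    using lift_label_eq_stat_seq unfolding lift_out_def P_def by simp
  ultimately show ?thesis by blast
qed

end
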